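(* Define sequences of primes as follows. For a prime $a$, let $S(a)=(s(1),s(2),\dots)$ be the sequence with $s(1)=a$ and, for $j\ge 2$, $s(j)$ the largest prime less than $2s(j-1)$. Put $p^{(1)}=2$ and $B_1=S(2)$; inductively, for $k\ge 2$, let $p^{(k)}$ be the smallest prime not belonging to $B_1\cup\dots\cup B_{k-1}$, and put $B_k=S(p^{(k)})$. Call a prime $p$ an RPR-prime if, with $q$ the smallest prime greater than $p/2$, the open interval $(p,2q)$ contains a prime; let $(RPR)_n$ denote the $n$-th RPR-prime in increasing order. Then for every $n\ge 1$, $p^{(n)}=(RPR)_n$.
   Context: Equivalently (for odd $p=p_n$, $p_k$ the $k$-th prime), $p$ is an RPR-prime iff all integers $\frac{p+1}{2},\frac{p+3}{2},\dots,\frac{p_{n+1}-1}{2}$ are composite. The first RPR-primes are $2,11,17,29,41,47,59,67,71,97,101,107,109,127,\dots$. *)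

theory Defs
  imports "HOL-Computational_Algebra.Primes" "HOL-Library.Infinite_Set"
begin

definition largest_prime_below :: "nat \<Rightarrow> nat" where
  "largest_prime_below m = (GREATEST p. prime p \<and> p < m)"

(* S(a) = (s(1), s(2), ...), stored 0-based: seqS a j = s(j+1) *)
fun seqS :: "nat \<Rightarrow> nat \<Rightarrow> nat" where
  "seqS a 0 = a"
| "seqS a (Suc j) = largest_prime_below (2 * seqS a j)"

(* Ucov k = B_1 \<union> ... \<union> B_k ; B_{k+1} = S(p^(k+1)) with p^(k+1) the least prime not in Ucov k *)
fun Ucov :: "nat \<Rightarrow> nat set" where
  "Ucov 0 = {}"
| "Ucov (Suc k) = Ucov k \<union> range (seqS (LEAST p. prime p \<and> p \<notin> Ucov k))"

(* p^(k) for k \<ge> 1 : smallest prime not in B_1 \<union> ... \<union> B_{k-1}  (gives p^(1) = 2) *)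
definition pseq :: "nat \<Rightarrow> nat" where
  "pseq k = (LEAST p. prime p \<and> p \<notin> Ucov (k - 1))"

definition RPR_prime :: "nat \<Rightarrow> bool" where
  "RPR_prime p \<longleftrightarrow> prime p \<and>
     (let q = (LEAST q. prime q \<and> 2 * q > p)
      in \<exists>r. prime r \<and> p < r \<and> r < 2 * q)"

(* q > p/2 is written 2*q > p (exact over nat) *)
definition RPR :: "nat \<Rightarrow> nat" where
  "RPR n = enumerate {p. RPR_prime p} (n - 1)"

end

theory Submission
  imports Defs Complex_Main
begin

text \<open>Write \<open>g(p)\<close> for the largest prime below \<open>2p\<close>, so that \<open>S(a) = (a, g(a), g(g(a)), \<dots>)\<close>;
  by Bertrand's postulate \<open>p < g(p) < 2p\<close>. A prime \<open>r\<close> is an RPR-prime iff it is not a value of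
  \<open>g\<close>: if \<open>r = g(p)\<close> then the least prime \<open>q > r/2\<close> is at most \<open>p\<close>, so \<open>(r, 2q)\<close> contains no
  prime; conversely, if \<open>(r, 2q)\<close> contains no prime then \<open>r = g(q)\<close>. Hence each chain
  \<open>S(a)\<close> contains only one RPR-prime, its head, and a union of chains is closed under \<open>g\<close>.
  By induction, \<open>B\<^sub>1 \<union> \<dots> \<union> B\<^sub>k\<close> contains exactly the first \<open>k\<close> RPR-primes and, following
  \<open>g\<close> backwards, every prime below the \<open>(k+1)\<close>-st, which is thus the least prime not yet covered.
  That there are infinitely many RPR-primes follows from Erdos's proof of Bertrand's postulate,
  which shows that \<open>(z, 2z]\<close> contains arbitrarily many primes: without RPR-primes beyond \<open>N\<close>,
  the map sending \<open>r\<close> to the least prime above \<open>r/2\<close> would inject the primes of \<open>(2N, 2z]\<close>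
  into those of \<open>(N, z]\<close> plus one more.\<close>

section \<open>Bertrand's postulate\<close>

definition primes_between :: "nat \<Rightarrow> nat \<Rightarrow> nat set" where
  "primes_between a b = {p. prime p \<and> a < p \<and> p \<le> b}"

lemma finite_primes_between [simp]: "finite (primes_between a b)"
  unfolding primes_between_def by (rule finite_subset[of _ "{..b}"]) auto

lemma card_primes_between_split:
  assumes "a \<le> b" "b \<le> c"
  shows "card (primes_between a c) = card (primes_between a b) + card (primes_between b c)"
proof -
  have "primes_between a c = primes_between a b \<union> primes_between b c"
    using assms unfolding primes_between_def by auto
  moreover have "primes_between a b \<inter> primes_between b c = {}"
    unfolding primes_between_def by auto
  ultimately show ?thesis by (simp add: card_Un_disjoint)
qed

lemma prod_primes_dvd:
  fixes x :: nat
  assumes "finite S" "\<And>p. p \<in> S \<Longrightarrow> prime p \<and> p dvd x"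
  shows "\<Prod>S dvd x"
  using assms
proof (induction S rule: finite_induct)
  case (insert p S)
  have "prime p" "p dvd x" "\<Prod>S dvd x" using insert by auto
  moreover have "\<not> p dvd \<Prod>S"
    using insert \<open>prime p\<close> by (metis insertCI prime_dvd_prod_iff primes_dvd_imp_eq)
  ultimately show ?case
    using insert.hyps by (simp add: divides_mult prime_imp_coprime)
qed simp

definition primorial :: "nat \<Rightarrow> nat" where
  "primorial x = \<Prod>{p. prime p \<and> p \<le> x}"

lemma prod_primes_between_le_four_pow: "\<Prod>(primes_between (m + 1) (2 * m + 1)) \<le> 4 ^ m"
proof -
  have "\<Prod>(primes_between (m + 1) (2 * m + 1)) dvd (2 * m + 1) choose m"
  proof (rule prod_primes_dvd)
    fix p assume p: "p \<in> primes_between (m + 1) (2 * m + 1)"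
    have "fact m * fact (m + 1) * ((2 * m + 1) choose m) = (fact (2 * m + 1) :: nat)"
      using binomial_fact_lemma[of m "2 * m + 1"] by (simp add: Suc_diff_le)
    moreover have "p dvd (fact (2 * m + 1) :: nat)" "\<not> p dvd (fact m :: nat)"
        "\<not> p dvd (fact (m + 1) :: nat)"
      using p prime_dvd_fact_iff[of p "2 * m + 1"] prime_dvd_fact_iff[of p m]
        prime_dvd_fact_iff[of p "m + 1"]
      unfolding primes_between_def by auto
    ultimately show "prime p \<and> p dvd (2 * m + 1) choose m"
      using p unfolding primes_between_def by (metis mem_Collect_eq prime_dvd_mult_iff)
  qed simp
  then have "\<Prod>(primes_between (m + 1) (2 * m + 1)) \<le> (2 * m + 1) choose m"
    by (rule dvd_imp_le) simp
  also have "\<dots> \<le> (\<Sum>k\<le>m. (2 * m + 1) choose k)" by (rule member_le_sum) auto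
  also have "\<dots> = 4 ^ m" using binomial_r_part_sum[of m] by (simp add: power_mult)
  finally show ?thesis .
qed

lemma primorial_le_four_pow: "primorial x \<le> 4 ^ x"
proof (induction x rule: less_induct)
  case (less x)
  consider "x \<le> 2" | "2 < x" "\<not> prime x" | m where "x = 2 * m + 1" "1 \<le> m"
  proof (cases "x \<le> 2 \<or> \<not> prime x")
    case False
    then have "odd x" using prime_odd_nat by auto
    then obtain m where "x = 2 * m + 1" by (metis oddE)
    with False that(3) show ?thesis by simp
  qed (meson that(1,2) not_le)
  then show ?case
  proof cases
    case 1
    then have "{p::nat. prime p \<and> p \<le> x} = (if x = 2 then {2} else {})"
      by (auto simp: le_Suc_eq dest: prime_ge_2_nat)
    then show ?thesis unfolding primorial_def by (simp del: Collect_empty_eq)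
  next
    case 2
    then have "{p. prime p \<and> p \<le> x} = {p. prime p \<and> p \<le> x - 1}"
      by (auto simp: le_diff_conv2) (metis le_antisym not_less_eq_eq Suc_pred le_neq_implies_less)
    then have "primorial x = primorial (x - 1)" unfolding primorial_def by simp
    also have "\<dots> \<le> 4 ^ (x - 1)" using less 2 by simp
    also have "\<dots> \<le> 4 ^ x" by (intro power_increasing) auto
    finally show ?thesis .
  next
    case 3
    have "{p. prime p \<and> p \<le> x} = {p. prime p \<and> p \<le> m + 1} \<union> primes_between (m + 1) x"
      using 3 unfolding primes_between_def by auto
    then have "primorial x = primorial (m + 1) * \<Prod>(primes_between (m + 1) x)"
      unfolding primorial_def primes_between_def by (subst prod.union_disjoint[symmetric]) auto
    also have "\<dots> \<le> 4 ^ (m + 1) * 4 ^ m"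
      using less.IH[of "m + 1"] prod_primes_between_le_four_pow[of m] 3 by (intro mult_le_mono) simp_all
    also have "\<dots> = 4 ^ x" using 3 by (simp flip: power_add)
    finally show ?thesis .
  qed
qed

lemma multiplicity_eq_card_prime_powers_dvd:
  fixes p m :: nat
  assumes "prime p" "0 < m" "m < p ^ (N + 1)"
  shows "multiplicity p m = card {i \<in> {1..N}. p ^ i dvd m}"
proof -
  have dvd_iff: "p ^ i dvd m \<longleftrightarrow> i \<le> multiplicity p m" for i
    using assms(1,2) not_prime_unit[of p] power_dvd_iff_le_multiplicity[of m p] by blast
  have "p ^ multiplicity p m \<le> m"
    using assms(2) by (intro dvd_imp_le multiplicity_dvd) auto
  then have "p ^ multiplicity p m < p ^ (N + 1)"
    using assms(3) by linarith
  then have "multiplicity p m \<le> N"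
    using assms(1) prime_gt_1_nat power_less_imp_less_exp by (metis Suc_eq_plus1 less_Suc_eq_le)
  then have "{i \<in> {1..N}. p ^ i dvd m} = {1..multiplicity p m}"
    unfolding dvd_iff by auto
  then show ?thesis by simp
qed

lemma multiplicity_fact_eq_sum_div:
  fixes p n :: nat
  assumes "prime p" "n < p ^ (N + 1)"
  shows "multiplicity p (fact n) = (\<Sum>i\<in>{1..N}. n div p ^ i)"
  using assms(2)
proof (induction n)
  case (Suc n)
  then have IH: "multiplicity p (fact n) = (\<Sum>i\<in>{1..N}. n div p ^ i)"
    by simp
  have "multiplicity p (fact (Suc n) :: nat) = multiplicity p (Suc n * fact n)"
    by simp
  also have "\<dots> = multiplicity p (Suc n) + multiplicity p (fact n :: nat)"
    using assms(1) by (intro prime_elem_multiplicity_mult_distrib) auto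
  also have "multiplicity p (Suc n) = card {i \<in> {1..N}. p ^ i dvd Suc n}"
    using multiplicity_eq_card_prime_powers_dvd[OF assms(1) _ Suc.prems] by simp
  also have "\<dots> = (\<Sum>i\<in>{1..N}. if p ^ i dvd Suc n then 1 else 0)"
    by (simp add: sum.inter_filter[symmetric])
  also have "\<dots> + multiplicity p (fact n :: nat) =
      (\<Sum>i\<in>{1..N}. (if p ^ i dvd Suc n then 1 else 0) + n div p ^ i)"
    by (simp add: IH sum.distrib)
  also have "\<dots> = (\<Sum>i\<in>{1..N}. Suc n div p ^ i)"
    by (intro sum.cong refl) (auto simp: div_Suc dvd_eq_mod_eq_0)
  finally show ?case .
qed simp

lemma multiplicity_central_binomial:
  fixes p n :: nat
  assumes "prime p" "2 * n < p ^ (N + 1)"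
  shows "multiplicity p (2 * n choose n) + 2 * (\<Sum>i\<in>{1..N}. n div p ^ i) =
    (\<Sum>i\<in>{1..N}. 2 * n div p ^ i)"
proof -
  have "fact n * fact n * (2 * n choose n) = (fact (2 * n) :: nat)"
    using binomial_fact_lemma[of n "2 * n"] by simp
  then have "multiplicity p (fact (2 * n) :: nat) = multiplicity p (fact n * fact n * (2 * n choose n) :: nat)"
    by simp
  also have "\<dots> = 2 * multiplicity p (fact n :: nat) + multiplicity p (2 * n choose n)"
    using assms by (simp add: prime_elem_multiplicity_mult_distrib)
  finally have "multiplicity p (fact (2 * n) :: nat) =
      2 * multiplicity p (fact n :: nat) + multiplicity p (2 * n choose n)" .
  moreover have "multiplicity p (fact n :: nat) = (\<Sum>i\<in>{1..N}. n div p ^ i)"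
    using assms by (intro multiplicity_fact_eq_sum_div) auto
  ultimately show ?thesis
    using multiplicity_fact_eq_sum_div[OF assms] by simp
qed

lemma multiplicity_central_binomial_le:
  fixes p n :: nat
  assumes "prime p" "2 * n < p ^ (N + 1)"
  shows "multiplicity p (2 * n choose n) \<le> N"
proof -
  have "2 * n div d \<le> 2 * (n div d) + 1" if "d > 0" for d :: nat
  proof -
    have "n = d * (n div d) + n mod d" "n mod d < d"
      using that by simp_all
    then have "2 * n < 2 * (d * (n div d)) + 2 * d"
      by linarith
    then have "2 * n < (2 * (n div d) + 2) * d"
      by (simp add: algebra_simps)
    then have "2 * n div d < 2 * (n div d) + 2"
      by (simp add: less_mult_imp_div_less)
    then show ?thesis by simp
  qed
  then have "(\<Sum>i\<in>{1..N}. 2 * n div p ^ i) \<le> (\<Sum>i\<in>{1..N}. 2 * (n div p ^ i) + 1)"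
    using prime_gt_0_nat[OF assms(1)] by (intro sum_mono) simp
  also have "\<dots> = 2 * (\<Sum>i\<in>{1..N}. n div p ^ i) + N"
    by (simp only: sum.distrib sum_distrib_left[symmetric]) simp
  finally show ?thesis using multiplicity_central_binomial[OF assms] by linarith
qed

lemma prime_power_multiplicity_central_binomial_le:
  fixes p n :: nat
  assumes "prime p" "0 < n"
  shows "p ^ multiplicity p (2 * n choose n) \<le> 2 * n"
proof (rule ccontr)
  let ?m = "multiplicity p (2 * n choose n)"
  assume "\<not> ?thesis"
  then have "2 * n < p ^ ?m" by simp
  moreover from this have "?m > 0" using assms by (cases ?m) auto
  ultimately have "2 * n < p ^ (?m - 1 + 1)" by simp
  then have "?m \<le> ?m - 1" using multiplicity_central_binomial_le[OF assms(1)] by blast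
  with \<open>?m > 0\<close> show False by simp
qed

lemma multiplicity_central_binomial_eq_0:
  fixes p n :: nat
  assumes "prime p" "2 * n < p\<^sup>2" "2 * n < 3 * p" "p \<le> n"
  shows "multiplicity p (2 * n choose n) = 0"
proof -
  have "n < p * 2" "p * 1 \<le> n" "2 * n < p * 3" "p * 2 \<le> 2 * n"
    using assms(3,4) by linarith+
  then have "n div p = 1" "2 * n div p = 2"
    using div_nat_eqI[of p 1 n] div_nat_eqI[of p 2 "2 * n"] by (simp_all add: numeral_2_eq_2 numeral_3_eq_3)
  then show ?thesis
    using multiplicity_central_binomial[OF assms(1), of n 1] assms(2) by (simp add: power2_eq_square)
qed

lemma finite_primes_square_le [simp]: "finite {p::nat. prime p \<and> p * p \<le> m}"
  by (rule finite_subset[of _ "{..m}"]) (auto intro: le_trans[OF le_square])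

lemma card_primes_square_le_less:
  fixes m s :: nat
  assumes "m < s * s"
  shows "card {p. prime p \<and> p * p \<le> m} < s"
proof -
  have "{p. prime p \<and> p * p \<le> m} \<subseteq> {2..<s}"
  proof
    fix p assume p: "p \<in> {p. prime p \<and> p * p \<le> m}"
    then have "p\<^sup>2 < s\<^sup>2" using assms by (simp add: power2_eq_square)
    then have "p < s" by (rule power_less_imp_less_base) simp
    with p show "p \<in> {2..<s}" by (auto dest: prime_ge_2_nat)
  qed
  then have "card {p. prime p \<and> p * p \<le> m} \<le> s - 2"
    using card_mono[of "{2..<s}"] by fastforce
  moreover have "0 < s" using assms by (cases s) auto
  ultimately show ?thesis by linarith
qed

lemma four_pow_le_central_binomial:
  fixes n :: nat
  assumes "0 < n"
  shows "4 ^ n \<le> 2 * n * (2 * n choose n)"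
proof -
  have "real (4 ^ n) \<le> real (2 * n * (2 * n choose n))"
    using central_binomial_lower_bound[OF assms] assms by (simp add: field_simps)
  then show ?thesis by (simp only: of_nat_le_iff)
qed

lemma prod_middle_prime_factors_central_binomial_le:
  fixes n :: nat
  defines "C \<equiv> 2 * n choose n"
  shows "(\<Prod>p\<in>{p \<in> prime_factors C. 2 * n < p * p \<and> p \<le> n}. p ^ multiplicity p C) \<le> 4 ^ (2 * n div 3)"
    (is "prod _ ?B \<le> _")
proof -
  have "p ^ multiplicity p C \<le> p" if "p \<in> ?B" for p
  proof -
    have "prime p" "2 * n < p ^ (1 + 1)"
      using that by (auto simp: power2_eq_square)
    then have "multiplicity p C \<le> 1"
      unfolding C_def by (rule multiplicity_central_binomial_le)
    then show ?thesis
      using prime_gt_0_nat[OF \<open>prime p\<close>] power_increasing[of _ 1 p] by simp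
  qed
  then have "(\<Prod>p\<in>?B. p ^ multiplicity p C) \<le> \<Prod>?B" by (intro prod_mono) simp
  also have "?B \<subseteq> {p. prime p \<and> p \<le> 2 * n div 3}"
  proof
    fix p assume "p \<in> ?B"
    then have "prime p" "2 * n < p\<^sup>2" "p \<le> n" "multiplicity p C \<noteq> 0"
      by (auto simp: power2_eq_square prime_factors_multiplicity)
    then have "\<not> 2 * n < 3 * p"
      using multiplicity_central_binomial_eq_0[of p n] by (auto simp: C_def)
    with \<open>prime p\<close> show "p \<in> {p. prime p \<and> p \<le> 2 * n div 3}" by simp
  qed
  then have "\<Prod>?B dvd primorial (2 * n div 3)"
    unfolding primorial_def by (intro prod_dvd_prod_subset) auto
  then have "\<Prod>?B \<le> primorial (2 * n div 3)"
    by (rule dvd_imp_le) (simp add: primorial_def prime_gt_0_nat)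
  also have "\<dots> \<le> 4 ^ (2 * n div 3)" by (rule primorial_le_four_pow)
  finally show ?thesis .
qed

lemma large_prime_factors_central_binomial:
  fixes n :: nat
  assumes "0 < n"
  shows "{p \<in> prime_factors (2 * n choose n). n < p} \<subseteq> primes_between n (2 * n)"
proof
  fix p assume p: "p \<in> {p \<in> prime_factors (2 * n choose n). n < p}"
  then have "prime p" "multiplicity p (2 * n choose n) \<noteq> 0"
    by (auto simp: prime_factors_multiplicity)
  then have "p \<le> p ^ multiplicity p (2 * n choose n)"
    using prime_gt_0_nat[of p] power_increasing[of 1 _ p] by simp
  also have "\<dots> \<le> 2 * n"
    using prime_power_multiplicity_central_binomial_le[OF \<open>prime p\<close> assms] .
  finally show "p \<in> primes_between n (2 * n)"
    using p \<open>prime p\<close> unfolding primes_between_def by simp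
qed

text \<open>Split the prime factors of \<open>2n choose n\<close> at \<open>\<surd>(2n)\<close> and \<open>n\<close>: the prime powers are
  at most \<open>2n\<close>, the middle primes contribute at most \<open>4 ^ (2n/3)\<close>, and the large primes lie
  in \<open>(n, 2n]\<close>.\<close>

lemma central_binomial_le_prime_count_bound:
  fixes n :: nat
  assumes "0 < n"
  shows "2 * n choose n \<le>
    (2 * n) ^ card {p. prime p \<and> p * p \<le> 2 * n} * 4 ^ (2 * n div 3) *
    (2 * n) ^ card (primes_between n (2 * n))"
proof -
  define C where "C = 2 * n choose n"
  define f where "f p = p ^ multiplicity p C" for p
  define A where "A = {p \<in> prime_factors C. p * p \<le> 2 * n}"
  define B where "B = {p \<in> prime_factors C. 2 * n < p * p \<and> p \<le> n}"
  define M where "M = {p \<in> prime_factors C. 2 * n < p * p \<and> n < p}"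
  have "C > 0" unfolding C_def by simp
  have f_le: "f p \<le> 2 * n" if "p \<in> prime_factors C" for p
    using that prime_power_multiplicity_central_binomial_le[of p n] assms
    unfolding f_def C_def by auto
  have split: "prime_factors C = A \<union> (B \<union> M)" unfolding A_def B_def M_def by auto
  have "C = prod f (prime_factors C)"
    unfolding f_def by (rule prime_factorization_nat[OF \<open>C > 0\<close>])
  also have "\<dots> = prod f A * prod f (B \<union> M)"
    unfolding split by (rule prod.union_disjoint) (auto simp: A_def B_def M_def)
  also have "prod f (B \<union> M) = prod f B * prod f M"
    by (rule prod.union_disjoint) (auto simp: B_def M_def)
  finally have factors: "C = prod f A * (prod f B * prod f M)" .
  have bound_A: "prod f A \<le> (2 * n) ^ card {p. prime p \<and> p * p \<le> 2 * n}"
  proof (rule prod_le_power)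
    show "card A \<le> card {p. prime p \<and> p * p \<le> 2 * n}"
      by (rule card_mono) (auto simp: A_def)
  qed (use assms f_le in \<open>auto simp: A_def\<close>)
  have bound_B: "prod f B \<le> 4 ^ (2 * n div 3)"
    unfolding f_def B_def C_def by (rule prod_middle_prime_factors_central_binomial_le)
  have bound_M: "prod f M \<le> (2 * n) ^ card (primes_between n (2 * n))"
  proof (rule prod_le_power)
    have "M \<subseteq> primes_between n (2 * n)"
      using large_prime_factors_central_binomial[OF assms] unfolding M_def C_def by blast
    then show "card M \<le> card (primes_between n (2 * n))" by (rule card_mono[rotated]) simp
  qed (use assms f_le in \<open>auto simp: M_def\<close>)
  show ?thesis
    unfolding C_def[symmetric] factors mult.assoc by (intro mult_le_mono bound_A bound_B bound_M)
qed

lemma square_bound_lt_two_pow: "15 \<le> j \<Longrightarrow> 72 * (j + 2) * (j + 2) < (2::nat) ^ j"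
proof (induction j rule: dec_induct)
  case (step j)
  have "(j + 3) * (j + 3) \<le> 2 * ((j + 2) * (j + 2))"
    using step(1) by (simp add: algebra_simps)
  then have "72 * ((j + 3) * (j + 3)) \<le> 72 * (2 * ((j + 2) * (j + 2)))"
    by (rule mult_le_mono2)
  also have "\<dots> = 2 * (72 * (j + 2) * (j + 2))" by (simp only: mult_ac)
  also have "\<dots> < 2 * 2 ^ j" using step(3) by simp
  finally have "72 * ((j + 3) * (j + 3)) < 2 * 2 ^ j" .
  moreover have "Suc j + 2 = j + 3" by simp
  ultimately show ?case by (simp only: mult.assoc power_Suc)
qed simp

lemma erdos_exponent_bound:
  fixes j :: nat
  assumes "15 \<le> j"
  shows "3 * (j + 2) * (2 ^ ((j + 3) div 2) + j) < 2 ^ (j + 1)"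
proof -
  define t where "t = (j + 3) div 2"
  have t: "j + 2 \<le> 2 * t" "2 * t \<le> j + 3" unfolding t_def by auto
  have sq: "(2::nat) ^ t * 2 ^ t = 2 ^ (2 * t)" by (simp add: mult_2 power_add)
  have bound: "72 * (j + 2) * (j + 2) < (2::nat) ^ j"
    using square_bound_lt_two_pow[OF assms] .
  have "j * j < 2 ^ j" using bound by (simp add: algebra_simps)
  also have "(2::nat) ^ j \<le> 2 ^ (2 * t)" using t by (intro power_increasing) auto
  finally have "j \<le> 2 ^ t" using sq by (metis mult_le_mono not_le less_imp_le order.strict_iff_not)
  define X where "X = 3 * (j + 2) * (2 ^ t + j)"
  have "X \<le> 3 * (j + 2) * (2 * 2 ^ t)"
    unfolding X_def using \<open>j \<le> 2 ^ t\<close> by (intro mult_le_mono2) simp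
  also have "\<dots> = 6 * (j + 2) * 2 ^ t" by simp
  finally have "X \<le> 6 * (j + 2) * 2 ^ t" .
  then have "X * X \<le> (6 * (j + 2) * 2 ^ t) * (6 * (j + 2) * 2 ^ t)"
    by (intro mult_le_mono)
  also have "\<dots> = 36 * ((j + 2) * (j + 2)) * 2 ^ (2 * t)"
    unfolding sq[symmetric] by (simp add: algebra_simps)
  also have "\<dots> \<le> 36 * ((j + 2) * (j + 2)) * 2 ^ (j + 3)"
    using t by (intro mult_le_mono power_increasing) auto
  also have "\<dots> = 4 * (72 * (j + 2) * (j + 2)) * 2 ^ j"
    by (simp add: power_add algebra_simps)
  also have "\<dots> < 4 * 2 ^ j * 2 ^ j" using bound by simp
  also have "\<dots> = 2 ^ (j + 1) * 2 ^ (j + 1)" by (simp add: power_add algebra_simps)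
  finally have "X < 2 ^ (j + 1)" by (metis mult_le_mono not_le)
  then show ?thesis unfolding X_def t_def .
qed

lemma card_primes_between_ge:
  fixes n j :: nat
  assumes "15 \<le> j" "2 ^ j \<le> n" "n < 2 ^ (j + 1)"
  shows "j \<le> card (primes_between n (2 * n))"
proof (rule ccontr)
  assume few: "\<not> j \<le> card (primes_between n (2 * n))"
  define t where "t = (j + 3) div 2"
  define B where "B = (2::nat) ^ (j + 2)"
  define a where "a = card {p. prime p \<and> p * p \<le> 2 * n}"
  define b where "b = card (primes_between n (2 * n))"
  have "0 < n" using assms(2) by (metis le_0_eq neq0_conv power_not_zero zero_neq_numeral)
  have "2 * n \<le> B" unfolding B_def using assms(3) by simp
  have "2 * n < 2 ^ t * 2 ^ t"
  proof -
    have "2 * n < 2 ^ (j + 2)" using assms(3) by simp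
    also have "(2::nat) ^ (j + 2) \<le> 2 ^ (2 * t)" unfolding t_def by (intro power_increasing) auto
    finally show ?thesis by (simp add: mult_2 power_add)
  qed
  then have "a < 2 ^ t" unfolding a_def by (rule card_primes_square_le_less)
  moreover have "b < j" using few unfolding b_def by simp
  ultimately have exponent: "1 + a + b \<le> 2 ^ t + j" by simp
  have "4 ^ n \<le> 2 * n * (2 * n choose n)"
    using four_pow_le_central_binomial[OF \<open>0 < n\<close>] .
  also have "\<dots> \<le> 2 * n * ((2 * n) ^ a * 4 ^ (2 * n div 3) * (2 * n) ^ b)"
    unfolding a_def b_def using central_binomial_le_prime_count_bound[OF \<open>0 < n\<close>] by simp
  also have "\<dots> \<le> B * (B ^ a * 4 ^ (2 * n div 3) * B ^ b)"
    using \<open>2 * n \<le> B\<close> by (intro mult_le_mono power_mono order.refl) auto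
  also have "\<dots> = 4 ^ (2 * n div 3) * B ^ (1 + a + b)"
    by (simp add: power_add algebra_simps)
  also have "\<dots> \<le> 4 ^ (2 * n div 3) * B ^ (2 ^ t + j)"
    using exponent unfolding B_def by (intro mult_le_mono order.refl power_increasing) auto
  finally have "4 ^ (2 * n div 3) * 4 ^ (n - 2 * n div 3) \<le> 4 ^ (2 * n div 3) * B ^ (2 ^ t + j)"
    by (simp flip: power_add)
  then have "4 ^ (n - 2 * n div 3) \<le> B ^ (2 ^ t + j)" by simp
  then have "(2::nat) ^ (2 * (n - 2 * n div 3)) \<le> 2 ^ ((j + 2) * (2 ^ t + j))"
    unfolding B_def by (simp only: power_mult) simp
  then have "2 * (n - 2 * n div 3) \<le> (j + 2) * (2 ^ t + j)" by simp
  moreover have "2 ^ (j + 1) \<le> 2 * n" using assms(2) by simp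
  ultimately have "2 ^ (j + 1) \<le> 3 * (j + 2) * (2 ^ t + j)" by linarith
  with erdos_exponent_bound[OF assms(1)] show False unfolding t_def by simp
qed

lemma prime_nat_by_trial_division:
  fixes p s :: nat
  assumes "1 < p" "p < (s + 1)\<^sup>2" "\<forall>d\<in>{2..s}. \<not> d dvd p"
  shows "prime p"
proof (rule ccontr)
  assume "\<not> prime p"
  then obtain d where d: "d dvd p" "d \<noteq> 1" "d \<noteq> p"
    using assms(1) prime_nat_iff by blast
  then obtain e where e: "p = d * e" by blast
  with d assms(1) have "2 \<le> d" "2 \<le> e" by (cases d; cases e; auto)+
  define m where "m = min d e"
  have "m dvd p" "2 \<le> m" using e \<open>2 \<le> d\<close> \<open>2 \<le> e\<close> unfolding m_def by (auto simp: min_def)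
  moreover have "m * m \<le> p" unfolding e m_def by (intro mult_le_mono) auto
  moreover from this have "m < s + 1"
    using assms(2) by (metis le_less_trans mult_le_mono not_le power2_eq_square)
  ultimately show False using assms(3) by simp
qed

lemma exists_in_doubling_chain:
  fixes a n :: nat
  assumes "successively (\<lambda>a b. a < b \<and> b \<le> 2 * a) (a # cs)" "a \<le> n" "n < last (a # cs)"
  shows "\<exists>c\<in>set cs. n < c \<and> c \<le> 2 * n"
  using assms
proof (induction cs arbitrary: a)
  case (Cons b cs)
  then have "b \<le> 2 * a" "successively (\<lambda>a b. a < b \<and> b \<le> 2 * a) (b # cs)"
    by (simp_all add: successively_Cons)
  show ?case
  proof (cases "n < b")
    case True
    then show ?thesis using \<open>b \<le> 2 * a\<close> Cons.prems(2) by auto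
  next
    case False
    then have "\<exists>c\<in>set cs. n < c \<and> c \<le> 2 * n"
      using Cons.IH[of b] Cons.prems(3) \<open>successively _ (b # cs)\<close> by (cases cs) auto
    then show ?thesis by auto
  qed
qed simp

lemma bertrand_below_39869:
  fixes n :: nat
  assumes "1 \<le> n" "n < 39869"
  shows "\<exists>p. prime p \<and> n < p \<and> p \<le> 2 * n"
proof -
  define certificate :: "(nat \<times> nat) list" where
    "certificate = [(2, 1), (3, 1), (5, 2), (7, 2), (13, 3), (23, 4), (43, 6), (83, 9), (163, 12),
      (317, 17), (631, 25), (1259, 35), (2503, 50), (5003, 70), (9973, 99), (19937, 141),
      (39869, 199)]"
  define cs where "cs = map fst certificate"
  have certified: "list_all (\<lambda>(c, s). 1 < c \<and> c < (s + 1)\<^sup>2 \<and> list_all (\<lambda>d. \<not> d dvd c) [2..<s + 1])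
      certificate"
    unfolding certificate_def by (simp add: power2_eq_square)
  have prime_certified: "prime c" if "(c, s) \<in> set certificate" for c s
  proof -
    from bspec[OF certified[unfolded list_all_iff] that]
    have "1 < c" "c < (s + 1)\<^sup>2" "\<forall>d\<in>{2..s}. \<not> d dvd c"
      by (auto simp: list_all_iff)
    then show ?thesis by (rule prime_nat_by_trial_division)
  qed
  have "successively (\<lambda>a b. a < b \<and> b \<le> 2 * a) (1 # cs)" "n < last (1 # cs)"
    using assms(2) unfolding cs_def certificate_def by simp_all
  then obtain c where "c \<in> set cs" "n < c" "c \<le> 2 * n"
    using exists_in_doubling_chain assms(1) by blast
  moreover from \<open>c \<in> set cs\<close> have "prime c"
    unfolding cs_def by (auto intro: prime_certified)
  ultimately show ?thesis by blast
qed

theorem bertrand: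
  fixes n :: nat
  assumes "1 \<le> n"
  shows "\<exists>p. prime p \<and> n < p \<and> p \<le> 2 * n"
proof (cases "n < 39869")
  case True
  then show ?thesis using bertrand_below_39869 assms by blast
next
  case False
  obtain j where j: "2 ^ j \<le> n" "n < 2 ^ (j + 1)"
    using ex_power_ivl1[of 2 n] assms by auto
  have "(2::nat) ^ 15 < 2 ^ (j + 1)" using j False by simp
  then have "15 \<le> j" using power_less_imp_less_exp[of "2::nat" 15 "j + 1"] by simp
  with card_primes_between_ge[OF this j] have "primes_between n (2 * n) \<noteq> {}" by auto
  then show ?thesis unfolding primes_between_def by auto
qed

lemma bertrand_prime:
  fixes p :: nat
  assumes "prime p"
  shows "\<exists>r. prime r \<and> p < r \<and> r < 2 * p"
proof -
  obtain r where r: "prime r" "p < r" "r \<le> 2 * p"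
    using bertrand[of p] prime_ge_1_nat[OF assms] by blast
  have "r \<noteq> 2 * p"
    using r(1) prime_gt_1_nat[OF assms] prime_product[of 2 p] by auto
  with r show ?thesis by auto
qed

lemma card_primes_between_unbounded: "\<exists>z\<ge>K. K \<le> card (primes_between z (2 * z))"
proof -
  define z where "z = (2::nat) ^ (K + 15)"
  have "K + 15 < z" unfolding z_def by (rule less_exp)
  moreover have "K + 15 \<le> card (primes_between z (2 * z))"
    unfolding z_def by (rule card_primes_between_ge) simp_all
  ultimately show ?thesis by (intro exI[of _ z]) auto
qed

section \<open>RPR-primes are the primes that are not successors\<close>

lemma largest_prime_below:
  assumes "prime r" "r < m"
  shows "prime (largest_prime_below m)" "largest_prime_below m < m" "r \<le> largest_prime_below m"
proof -
  have P: "prime r \<and> r < m" using assms by simp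
  have bounded: "\<And>y. prime y \<and> y < m \<Longrightarrow> y \<le> m" by simp
  from GreatestI_nat[where P = "\<lambda>p. prime p \<and> p < m", OF P bounded]
  show "prime (largest_prime_below m)" "largest_prime_below m < m"
    unfolding largest_prime_below_def by simp_all
  from Greatest_le_nat[where P = "\<lambda>p. prime p \<and> p < m", OF P bounded] show "r \<le> largest_prime_below m"
    unfolding largest_prime_below_def .
qed

abbreviation chain_next :: "nat \<Rightarrow> nat" where
  "chain_next p \<equiv> largest_prime_below (2 * p)"

lemma chain_next:
  assumes "prime p"
  shows "prime (chain_next p)" "p < chain_next p" "chain_next p < 2 * p"
proof -
  obtain r where r: "prime r" "p < r" "r < 2 * p" using bertrand_prime[OF assms] by blast
  show "prime (chain_next p)" "chain_next p < 2 * p"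
    using largest_prime_below[OF r(1,3)] by simp_all
  show "p < chain_next p"
    using largest_prime_below(3)[OF r(1,3)] r(2) by simp
qed

lemma chain_next_ge:
  assumes "prime r" "r < 2 * p"
  shows "r \<le> chain_next p"
  using largest_prime_below(3)[OF assms] .

definition least_prime_above_half :: "nat \<Rightarrow> nat" where
  "least_prime_above_half r = (LEAST q. prime q \<and> r < 2 * q)"

lemma least_prime_above_half:
  "prime (least_prime_above_half r)" "r < 2 * least_prime_above_half r"
proof -
  obtain q where "prime q" "r < q" using bigger_prime by blast
  then have "prime q \<and> r < 2 * q" by simp
  from LeastI[of "\<lambda>q. prime q \<and> r < 2 * q", OF this]
  show "prime (least_prime_above_half r)" "r < 2 * least_prime_above_half r"
    unfolding least_prime_above_half_def by simp_all
qed

lemma least_prime_above_half_le: "prime q \<Longrightarrow> r < 2 * q \<Longrightarrow> least_prime_above_half r \<le> q"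
  unfolding least_prime_above_half_def by (rule Least_le) simp

lemma RPR_prime_iff:
  "RPR_prime r \<longleftrightarrow> prime r \<and> (\<exists>s. prime s \<and> r < s \<and> s < 2 * least_prime_above_half r)"
  unfolding RPR_prime_def least_prime_above_half_def Let_def by simp

lemma not_RPR_prime_eq_chain_next:
  assumes "prime r" "\<not> RPR_prime r"
  shows "chain_next (least_prime_above_half r) = r"
proof -
  define q where "q = least_prime_above_half r"
  have "prime q" "r < 2 * q" unfolding q_def by (rule least_prime_above_half)+
  have "r \<le> chain_next q" using chain_next_ge[OF assms(1) \<open>r < 2 * q\<close>] .
  moreover have "\<not> (prime s \<and> r < s \<and> s < 2 * q)" for s
    using assms unfolding q_def RPR_prime_iff by blast
  then have "\<not> r < chain_next q" using chain_next[OF \<open>prime q\<close>] by blast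
  ultimately show ?thesis unfolding q_def by simp
qed

lemma RPR_prime_iff_not_chain_next:
  "RPR_prime r \<longleftrightarrow> prime r \<and> r \<notin> chain_next ` {p. prime p}"
proof
  assume "RPR_prime r"
  then obtain s where r: "prime r" and s: "prime s" "r < s" "s < 2 * least_prime_above_half r"
    unfolding RPR_prime_iff by blast
  have "chain_next p \<noteq> r" if "prime p" for p
  proof
    assume "chain_next p = r"
    then have "r < 2 * p" using chain_next(3)[OF that] by simp
    then have "least_prime_above_half r \<le> p" by (rule least_prime_above_half_le[OF that])
    then have "s < 2 * p" using s(3) by linarith
    then have "s \<le> chain_next p" by (rule chain_next_ge[OF s(1)])
    with \<open>chain_next p = r\<close> have "s \<le> r" by simp
    with s(2) show False by simp
  qed
  with r show "prime r \<and> r \<notin> chain_next ` {p. prime p}" by auto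
next
  assume r: "prime r \<and> r \<notin> chain_next ` {p. prime p}"
  show "RPR_prime r"
  proof (rule ccontr)
    assume "\<not> RPR_prime r"
    then have "r = chain_next (least_prime_above_half r)"
      using not_RPR_prime_eq_chain_next r by simp
    with r least_prime_above_half(1) show False by blast
  qed
qed

lemma prime_seqS: "prime a \<Longrightarrow> prime (seqS a j)"
  by (induction j) (simp_all add: chain_next(1))

lemma RPR_primes_in_seqS:
  assumes "RPR_prime a"
  shows "{x \<in> range (seqS a). RPR_prime x} = {a}"
proof -
  have "prime a" using assms unfolding RPR_prime_def by simp
  have "\<not> RPR_prime (seqS a (Suc j))" for j
    using prime_seqS[OF \<open>prime a\<close>, of j] unfolding RPR_prime_iff_not_chain_next by auto
  then have "x = a" if x: "x \<in> range (seqS a)" "RPR_prime x" for x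
  proof -
    obtain j where "x = seqS a j" using x(1) by blast
    with x(2) \<open>\<And>j. \<not> RPR_prime (seqS a (Suc j))\<close> show ?thesis by (cases j) auto
  qed
  moreover have "a = seqS a 0" by simp
  ultimately show ?thesis using assms by blast
qed

text \<open>If no prime above \<open>2N\<close> is an RPR-prime, each prime \<open>r \<in> (2N, 2z]\<close> is the successor of
  \<open>least_prime_above_half r\<close>, which therefore determines \<open>r\<close> and lies in \<open>(N, z]\<close> or is the
  least prime above \<open>z\<close>.\<close>

lemma card_primes_between_double_le:
  assumes "\<And>r. 2 * N < r \<Longrightarrow> \<not> RPR_prime r"
  shows "card (primes_between (2 * N) (2 * z)) \<le> card (primes_between N z) + 1"
proof -
  define A where "A = primes_between (2 * N) (2 * z)"
  define z' where "z' = (LEAST q. prime q \<and> z < q)"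
  have z': "prime z'" "z < z'" "\<And>q. prime q \<Longrightarrow> z < q \<Longrightarrow> z' \<le> q"
    using LeastI_ex[OF bigger_prime[of z]] Least_le[of "\<lambda>q. prime q \<and> z < q"]
    unfolding z'_def by auto
  have chain: "chain_next (least_prime_above_half r) = r" if "r \<in> A" for r
    using that assms not_RPR_prime_eq_chain_next
    unfolding A_def primes_between_def by auto
  then have "inj_on least_prime_above_half A" by (metis inj_onI)
  moreover have "least_prime_above_half ` A \<subseteq> insert z' (primes_between N z)"
  proof
    fix q assume "q \<in> least_prime_above_half ` A"
    then obtain r where r: "r \<in> A" "q = least_prime_above_half r" by blast
    then have "prime q" "r < 2 * q" using least_prime_above_half by simp_all
    moreover have "2 * N < r" "r \<le> 2 * z" "prime r" using r(1) unfolding A_def primes_between_def by simp_all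
    moreover have "q \<le> z'" using r(2) least_prime_above_half_le[OF z'(1)] z'(2) calculation by simp
    moreover have "z < q \<Longrightarrow> z' \<le> q" using z'(3) \<open>prime q\<close> by simp
    ultimately show "q \<in> insert z' (primes_between N z)"
      unfolding primes_between_def by fastforce
  qed
  ultimately have "card A \<le> card (insert z' (primes_between N z))"
    by (intro card_inj_on_le) simp_all
  also have "\<dots> \<le> card (primes_between N z) + 1" by (simp add: card_insert_if)
  finally show ?thesis unfolding A_def .
qed

lemma infinite_RPR_primes: "infinite {p. RPR_prime p}"
proof
  assume "finite {p. RPR_prime p}"
  then obtain N where N: "\<And>r. RPR_prime r \<Longrightarrow> r \<le> N"
    unfolding finite_nat_set_iff_bounded_le by auto
  obtain z where z: "3 * N + 2 \<le> z" "3 * N + 2 \<le> card (primes_between z (2 * z))"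
    using card_primes_between_unbounded by blast
  have "card (primes_between (2 * N) z) + card (primes_between z (2 * z)) =
      card (primes_between (2 * N) (2 * z))"
    using z(1) by (intro card_primes_between_split[symmetric]) auto
  also have "\<dots> \<le> card (primes_between N z) + 1"
    using N by (intro card_primes_between_double_le) (metis less_le_not_le le_add2 mult_2 order_trans)
  also have "card (primes_between N z) = card (primes_between N (2 * N)) + card (primes_between (2 * N) z)"
    using z(1) by (intro card_primes_between_split) auto
  also have "card (primes_between N (2 * N)) \<le> card {N<..2 * N}"
    by (rule card_mono) (auto simp: primes_between_def)
  finally have "card (primes_between z (2 * z)) \<le> N + 1" by simp
  with z(2) show False by linarith
qed

section \<open>The chains cover the primes in the order of the RPR-primes\<close>

abbreviation rpr :: "nat \<Rightarrow> nat" where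
  "rpr \<equiv> enumerate {p. RPR_prime p}"

lemma RPR_prime_rpr: "RPR_prime (rpr k)"
  using enumerate_in_set[OF infinite_RPR_primes] by simp

lemma chain_next_Ucov: "x \<in> Ucov k \<Longrightarrow> chain_next x \<in> Ucov k"
proof (induction k)
  case (Suc k)
  then show ?case by (auto simp flip: seqS.simps(2))
qed simp

text \<open>Every prime below \<open>rpr k\<close> is in \<open>U\<close>: by strong induction, it is either one of the RPR-primes
  \<open>rpr i\<close>, \<open>i < k\<close>, or the successor of a smaller prime.\<close>

lemma Least_prime_notin_chain_closed:
  assumes closed: "\<And>x. x \<in> U \<Longrightarrow> chain_next x \<in> U"
    and RPR_part: "{x \<in> U. RPR_prime x} = rpr ` {..<k}"
  shows "(LEAST p. prime p \<and> p \<notin> U) = rpr k"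
proof (rule Least_equality)
  have "rpr i < rpr k" if "i < k" for i
    using enumerate_mono[OF that infinite_RPR_primes] .
  then have "rpr k \<notin> rpr ` {..<k}"
    by (metis imageE lessThan_iff less_irrefl)
  then show "prime (rpr k) \<and> rpr k \<notin> U"
    using RPR_part RPR_prime_rpr unfolding RPR_prime_def by blast
next
  have "p \<in> U" if "prime p" "p < rpr k" for p
    using that
  proof (induction p rule: less_induct)
    case (less p)
    show ?case
    proof (cases "RPR_prime p")
      case True
      then obtain i where "rpr i = p" using enumerate_Ex[OF infinite_RPR_primes] by auto
      with less.prems(2) have "i < k" using enumerate_mono_iff[OF infinite_RPR_primes] by metis
      with \<open>rpr i = p\<close> True show ?thesis using RPR_part by blast
    next
      case False
      with less.prems(1) obtain q where "prime q" "chain_next q = p"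
        unfolding RPR_prime_iff_not_chain_next by blast
      moreover from this have "q < p" using chain_next(2) by blast
      ultimately show ?thesis using less closed by force
    qed
  qed
  then show "rpr k \<le> y" if "prime y \<and> y \<notin> U" for y
    using that not_le by blast
qed

lemma RPR_primes_in_Ucov: "{x \<in> Ucov k. RPR_prime x} = rpr ` {..<k}"
proof (induction k)
  case (Suc k)
  have "(LEAST p. prime p \<and> p \<notin> Ucov k) = rpr k"
    using Least_prime_notin_chain_closed[OF chain_next_Ucov Suc.IH] .
  then have "{x \<in> Ucov (Suc k). RPR_prime x} =
      {x \<in> Ucov k. RPR_prime x} \<union> {x \<in> range (seqS (rpr k)). RPR_prime x}"
    by auto
  also have "\<dots> = rpr ` {..<Suc k}"
    unfolding Suc.IH RPR_primes_in_seqS[OF RPR_prime_rpr] lessThan_Suc by auto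
  finally show ?case .
qed simp

text \<open>Both sides are indexed by the truncated \<open>n - 1\<close>.\<close>

theorem theorem1:
  fixes n :: nat
  assumes "n \<ge> 1"
  shows "pseq n = RPR n"
  unfolding pseq_def RPR_def
  using Least_prime_notin_chain_closed[OF chain_next_Ucov RPR_primes_in_Ucov] .

end
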